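(* Let $d\ge1$, $p>1$, let $\{1,\dots,d\}$ be partitioned into $\mathcal{D}$ (desirable) and $\mathcal{U}$ (undesirable), let $c\in\mathbb{R}^d$ with $c_f>0$, let $\mathbb{C}\in\mathbb{R}^{d\times d}$ be the contribution matrix of a causal graph and $h_0\in\mathbb{R}^d$ with $\mathbb{C}h_0\ge0$ componentwise, let $\alpha\in\mathbb{R}$ and $\beta\in(0,1)$. Consider the agent's problem $$\min_{e\in\mathbb{R}^d,\ e\ge0}\ \Big(\sum_{f} c_f e_f^{\,p}\Big)^{1/p}\quad\text{s.t.}\quad(\mathbb{C}h_0)^\top e\ge\alpha .$$ If $$\Big[\sum_{f\in\mathcal{D}}\Big(\frac{(\mathbb{C}h_0)_f}{c_f}\Big)^{2/(p-1)}\Big]^{1/2}\ \ge\ \frac{\beta}{\sqrt{1-\beta^2}}\Big[\sum_{f\in\mathcal{U}}\Big(\frac{(\mathbb{C}h_0)_f}{c_f}\Big)^{2/(p-1)}\Big]^{1/2},$$ then every optimal solution (best response) of this problem is a $\beta$-desirable effort profile.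
   Context: A causal graph is a weighted directed acyclic graph on $\{1,\dots,d\}$ with adjacency matrix $A$ ($A_{ij}$ the weight of edge $i\to j$, $0$ if absent); its contribution matrix is $\mathbb{C}=\sum_{k=0}^{d}A^k$. An effort profile $e$ is $\beta$-desirable if $\|e_{\mathcal{D}}\|_2\ge\beta\|e\|_2$, where $e_{\mathcal{D}}$ is the restriction of $e$ to the coordinates in $\mathcal{D}$. *)

theory Defs
  imports "HOL-Analysis.Analysis"
begin

text \<open>Nodes {1..d} are represented by a finite type 'n (so d = CARD('n) \<ge> 1).\<close>

primrec matpow :: "real^'n^'n \<Rightarrow> nat \<Rightarrow> real^'n^'n" where
  "matpow A 0 = mat 1"
| "matpow A (Suc k) = matpow A k ** A"

definition causal_graph :: "real^'n^'n \<Rightarrow> bool" where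
  "causal_graph A \<longleftrightarrow> acyclic {(i, j). A $ i $ j \<noteq> 0}"

definition contribution_matrix :: "real^'n::finite^'n \<Rightarrow> real^'n^'n" where
  "contribution_matrix A = (\<Sum>k\<in>{0..CARD('n)}. matpow A k)"

definition restrict_vec :: "'n set \<Rightarrow> real^'n \<Rightarrow> real^'n" where
  "restrict_vec S e = (\<chi> i. if i \<in> S then e $ i else 0)"

definition beta_desirable :: "'n set \<Rightarrow> real \<Rightarrow> real^'n \<Rightarrow> bool" where
  "beta_desirable D \<beta> e \<longleftrightarrow> norm (restrict_vec D e) \<ge> \<beta> * norm e"

definition agent_cost :: "real \<Rightarrow> real^'n::finite \<Rightarrow> real^'n \<Rightarrow> real" where
  "agent_cost p c e = (\<Sum>f\<in>UNIV. c $ f * (e $ f) powr p) powr (1 / p)"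

definition agent_feasible :: "real^'n::finite \<Rightarrow> real \<Rightarrow> real^'n \<Rightarrow> bool" where
  "agent_feasible w \<alpha> e \<longleftrightarrow> (\<forall>f. e $ f \<ge> 0) \<and> w \<bullet> e \<ge> \<alpha>"

definition best_response :: "real \<Rightarrow> real^'n::finite \<Rightarrow> real^'n \<Rightarrow> real \<Rightarrow> real^'n \<Rightarrow> bool" where
  "best_response p c w \<alpha> e \<longleftrightarrow> agent_feasible w \<alpha> e \<and>
     (\<forall>e'. agent_feasible w \<alpha> e' \<longrightarrow> agent_cost p c e \<le> agent_cost p c e')"

end

theory Submission
  imports Defs
begin

text \<open>
  With w = C h0, minimising the cost means minimising the strictly convex function
  \<Sum>f c_f e_f^p over the non-negative orthant cut by the half-space w \<bullet> e \<ge> \<alpha>. Its gradient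
  p c_f e_f^(p-1) is a multiple of w exactly on the ray spanned by u_f = (w_f / c_f)^(1/(p-1)),
  and the tangent inequality of strict convexity shows that every best response lies on this ray
  (it is 0 when \<alpha> \<le> 0). Being \<beta>-desirable is invariant under scaling, and for u the two sums
  in the hypothesis are exactly |u_D|^2 and |u_U|^2, so the hypothesis says
  \<beta>^2 |u|^2 = \<beta>^2 (|u_D|^2 + |u_U|^2) \<le> |u_D|^2.
\<close>

lemma powr_diff_mean_value:
  fixes x y p :: real
  assumes "0 < x" "x < y"
  shows "\<exists>z. x < z \<and> z < y \<and> y powr p - x powr p = (y - x) * (p * z powr (p - 1))"
proof -
  have "((\<lambda>z. z powr p) has_real_derivative p * t powr (p - 1)) (at t)"
    if "x \<le> t" "t \<le> y" for t
    using assms that by (intro has_real_derivative_powr) auto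
  from MVT2[OF assms(2) this] show ?thesis by blast
qed

lemma powr_tangent_less:
  fixes a b p :: real
  assumes "0 \<le> a" "0 \<le> b" "a \<noteq> b" "p > 1"
  shows "a powr p + p * a powr (p - 1) * (b - a) < b powr p"
proof -
  consider "a = 0" | "b = 0" "a > 0" | "0 < a" "a < b" | "0 < b" "b < a"
    using assms by linarith
  then show ?thesis
  proof cases
    case 1
    then show ?thesis using assms by simp
  next
    case 2
    have "a powr (p - 1) * a = a powr p"
      using powr_mult_base[of a "p - 1"] \<open>a > 0\<close> by (simp add: mult.commute)
    then show ?thesis using 2 assms by (simp add: algebra_simps)
  next
    case 3
    then obtain z where z: "a < z" "z < b" "b powr p - a powr p = (b - a) * (p * z powr (p - 1))"
      using powr_diff_mean_value by blast
    have "a powr (p - 1) < z powr (p - 1)"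
      using z 3 assms by (intro powr_less_mono2) auto
    then have "p * a powr (p - 1) * (b - a) < p * z powr (p - 1) * (b - a)"
      using 3 assms by simp
    then show ?thesis using z by (simp add: algebra_simps)
  next
    case 4
    then obtain z where z: "b < z" "z < a" "a powr p - b powr p = (a - b) * (p * z powr (p - 1))"
      using powr_diff_mean_value by blast
    have "z powr (p - 1) < a powr (p - 1)"
      using z 4 assms by (intro powr_less_mono2) auto
    then have "p * z powr (p - 1) * (a - b) < p * a powr (p - 1) * (a - b)"
      using 4 assms by simp
    then show ?thesis using z by (simp add: algebra_simps)
  qed
qed

definition power_sum :: "real \<Rightarrow> real^'n::finite \<Rightarrow> real^'n \<Rightarrow> real" where
  "power_sum p c e = (\<Sum>f\<in>UNIV. c $ f * (e $ f) powr p)"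

lemma power_sum_nonneg:
  assumes "\<And>f. c $ f \<ge> 0"
  shows "power_sum p c e \<ge> 0"
  unfolding power_sum_def using assms by (intro sum_nonneg) simp

lemma power_sum_eq_0_iff:
  assumes "\<And>f. c $ f > 0" "p > 0" "\<And>f. e $ f \<ge> 0"
  shows "power_sum p c e = 0 \<longleftrightarrow> e = 0"
proof
  assume "power_sum p c e = 0"
  then have "c $ f * (e $ f) powr p = 0" for f
    unfolding power_sum_def using assms(1)
    by (subst (asm) sum_nonneg_eq_0_iff) (auto intro!: mult_nonneg_nonneg less_imp_le[OF assms(1)])
  then show "e = 0" using assms(1) by (simp add: vec_eq_iff less_imp_neq[symmetric])
qed (use assms(2) in \<open>simp add: power_sum_def\<close>)

lemma best_response_power_sum_le:
  assumes "best_response p c w \<alpha> e" "agent_feasible w \<alpha> e'" "p > 0" "\<And>f. c $ f \<ge> 0"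
  shows "power_sum p c e \<le> power_sum p c e'"
proof (rule ccontr)
  assume "\<not> power_sum p c e \<le> power_sum p c e'"
  then have "power_sum p c e' powr (1 / p) < power_sum p c e powr (1 / p)"
    using assms by (intro powr_less_mono2) (auto simp: power_sum_nonneg)
  moreover have "agent_cost p c e \<le> agent_cost p c e'"
    using assms by (simp add: best_response_def)
  ultimately show False by (simp add: agent_cost_def power_sum_def)
qed

lemma power_sum_tangent_less:
  assumes "p > 1" "\<And>f. c $ f > 0" "\<And>f. x $ f \<ge> 0" "\<And>f. y $ f \<ge> 0" "x \<noteq> y"
  shows "power_sum p c x + p * (\<Sum>f\<in>UNIV. c $ f * (x $ f) powr (p - 1) * (y $ f - x $ f))
           < power_sum p c y"
proof -
  define T where "T f = c $ f * ((x $ f) powr p + p * (x $ f) powr (p - 1) * (y $ f - x $ f))" for f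
  obtain g where "x $ g \<noteq> y $ g" using \<open>x \<noteq> y\<close> by (auto simp: vec_eq_iff)
  have "T f \<le> c $ f * (y $ f) powr p" for f
    unfolding T_def using assms powr_tangent_less[of "x $ f" "y $ f" p]
    by (cases "x $ f = y $ f") (auto intro: mult_left_mono less_imp_le)
  moreover have "T g < c $ g * (y $ g) powr p"
    unfolding T_def using assms \<open>x $ g \<noteq> y $ g\<close> by (simp add: powr_tangent_less)
  ultimately have "sum T UNIV < power_sum p c y"
    unfolding power_sum_def by (intro sum_strict_mono_ex1) auto
  moreover have "sum T UNIV = power_sum p c x
      + p * (\<Sum>f\<in>UNIV. c $ f * (x $ f) powr (p - 1) * (y $ f - x $ f))"
    unfolding T_def power_sum_def
    by (simp add: distrib_left sum.distrib sum_distrib_left mult.assoc mult.left_commute)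
  ultimately show ?thesis by simp
qed

definition response_direction :: "real \<Rightarrow> real^'n::finite \<Rightarrow> real^'n \<Rightarrow> real^'n" where
  "response_direction p c w = (\<chi> f. (w $ f / c $ f) powr (1 / (p - 1)))"

lemma response_direction_nonneg: "response_direction p c w $ f \<ge> 0"
  by (simp add: response_direction_def)

lemma response_direction_pos_iff:
  assumes "c $ f > 0" "w $ f \<ge> 0"
  shows "response_direction p c w $ f > 0 \<longleftrightarrow> w $ f > 0"
  using assms by (auto simp: response_direction_def)

lemma response_direction_gradient:
  assumes "p > 1" "c $ f > 0" "w $ f \<ge> 0"
  shows "c $ f * (response_direction p c w $ f) powr (p - 1) = w $ f"
  using assms by (simp add: response_direction_def powr_powr)

lemma response_direction_power2:
  assumes "p > 1" "c $ f > 0" "w $ f \<ge> 0"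
  shows "(response_direction p c w $ f)\<^sup>2 = (w $ f / c $ f) powr (2 / (p - 1))"
  using assms by (simp add: response_direction_def powr_powr flip: powr_realpow')

lemma inner_response_direction_pos:
  assumes "\<And>f. c $ f > 0" "\<And>f. w $ f \<ge> 0" "w \<noteq> 0"
  shows "w \<bullet> response_direction p c w > 0"
proof -
  obtain g where "w $ g \<noteq> 0" using \<open>w \<noteq> 0\<close> by (auto simp: vec_eq_iff)
  then have "w $ g * response_direction p c w $ g > 0"
    using assms response_direction_pos_iff[of c g w p] by (simp add: order_less_le)
  then show ?thesis
    unfolding inner_vec_def using assms(2)
    by (intro sum_pos2[where i = g]) (simp_all add: response_direction_nonneg)
qed

lemma power_sum_scaled_direction_less:
  assumes "p > 1" "\<And>f. c $ f > 0" "\<And>f. w $ f \<ge> 0" "t \<ge> 0" "\<And>f. y $ f \<ge> 0"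
    and "w \<bullet> (t *\<^sub>R response_direction p c w) \<le> w \<bullet> y"
    and "y \<noteq> t *\<^sub>R response_direction p c w"
  shows "power_sum p c (t *\<^sub>R response_direction p c w) < power_sum p c y"
proof -
  define x where "x = t *\<^sub>R response_direction p c w"
  have gradient: "c $ f * (x $ f) powr (p - 1) = t powr (p - 1) * w $ f" for f
    using assms response_direction_gradient[of p c f w]
    by (simp add: x_def powr_mult response_direction_nonneg mult.left_commute)
  have "(\<Sum>f\<in>UNIV. c $ f * (x $ f) powr (p - 1) * (y $ f - x $ f)) = t powr (p - 1) * (w \<bullet> y - w \<bullet> x)"
    by (simp add: gradient inner_vec_def sum_distrib_left sum_subtractf algebra_simps)
  also have "\<dots> \<ge> 0" using assms by (simp add: x_def)
  finally have "power_sum p c x \<le> power_sum p c x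
      + p * (\<Sum>f\<in>UNIV. c $ f * (x $ f) powr (p - 1) * (y $ f - x $ f))"
    using assms by simp
  also have "\<dots> < power_sum p c y"
    using assms by (intro power_sum_tangent_less) (auto simp: x_def response_direction_nonneg)
  finally show ?thesis by (simp add: x_def)
qed

lemma best_response_scaled_direction:
  assumes "p > 1" "\<And>f. c $ f > 0" "\<And>f. w $ f \<ge> 0" "best_response p c w \<alpha> e"
  shows "\<exists>t \<ge> 0. e = t *\<^sub>R response_direction p c w"
proof -
  define u where "u = response_direction p c w"
  have e_feasible: "\<And>f. e $ f \<ge> 0" "w \<bullet> e \<ge> \<alpha>"
    using assms(4) by (auto simp: best_response_def agent_feasible_def)
  have minimal: "power_sum p c e \<le> power_sum p c e'" if "agent_feasible w \<alpha> e'" for e'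
    using assms that by (intro best_response_power_sum_le) (auto intro: less_imp_le)
  show ?thesis
  proof (cases "\<alpha> \<le> 0")
    case True
    then have "power_sum p c e \<le> 0"
      using minimal[of 0] assms(1) by (simp add: agent_feasible_def power_sum_def)
    then have "e = 0"
      using power_sum_nonneg[of c p e] power_sum_eq_0_iff[of c p e] assms e_feasible
      by (simp add: less_imp_le)
    then show ?thesis by auto
  next
    case False
    then have "w \<noteq> 0" using e_feasible by auto
    then have wu: "w \<bullet> u > 0" using assms by (simp add: u_def inner_response_direction_pos)
    define t where "t = \<alpha> / (w \<bullet> u)"
    have "t \<ge> 0" using False wu by (simp add: t_def)
    have "w \<bullet> (t *\<^sub>R u) = \<alpha>" using wu by (simp add: t_def)
    have "e = t *\<^sub>R u"
    proof (rule ccontr)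
      assume "e \<noteq> t *\<^sub>R u"
      then have "power_sum p c (t *\<^sub>R u) < power_sum p c e"
        using assms \<open>t \<ge> 0\<close> \<open>w \<bullet> (t *\<^sub>R u) = \<alpha>\<close> e_feasible unfolding u_def
        by (intro power_sum_scaled_direction_less) auto
      moreover have "agent_feasible w \<alpha> (t *\<^sub>R u)"
        using \<open>t \<ge> 0\<close> \<open>w \<bullet> (t *\<^sub>R u) = \<alpha>\<close> by (simp add: agent_feasible_def u_def response_direction_nonneg)
      ultimately show False using minimal by fastforce
    qed
    then show ?thesis using \<open>t \<ge> 0\<close> unfolding u_def by blast
  qed
qed

lemma norm_restrict_vec_power2: "(norm (restrict_vec S x))\<^sup>2 = (\<Sum>f\<in>S. (x $ f)\<^sup>2)"
proof -
  have "(norm (restrict_vec S x))\<^sup>2 = (\<Sum>f\<in>UNIV. if f \<in> S then (x $ f)\<^sup>2 else 0)"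
    unfolding power2_norm_eq_inner inner_vec_def restrict_vec_def
    by (intro sum.cong) (auto simp: power2_eq_square)
  then show ?thesis by (simp add: sum.If_cases)
qed

lemma beta_desirable_scaleR:
  assumes "beta_desirable D \<beta> x"
  shows "beta_desirable D \<beta> (t *\<^sub>R x)"
proof -
  have "restrict_vec D (t *\<^sub>R x) = t *\<^sub>R restrict_vec D x"
    by (simp add: restrict_vec_def vec_eq_iff)
  then show ?thesis
    using assms mult_left_mono[of "\<beta> * norm x" "norm (restrict_vec D x)" "\<bar>t\<bar>"]
    by (simp add: beta_desirable_def mult.left_commute)
qed

lemma beta_desirable_of_partition:
  assumes "D \<inter> U = {}" "D \<union> U = UNIV" "0 \<le> \<beta>" "\<beta> < 1"
    and "\<beta> / sqrt (1 - \<beta>\<^sup>2) * sqrt (\<Sum>f\<in>U. (x $ f)\<^sup>2) \<le> sqrt (\<Sum>f\<in>D. (x $ f)\<^sup>2)"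
  shows "beta_desirable D \<beta> x"
proof -
  define SD where "SD = (\<Sum>f\<in>D. (x $ f)\<^sup>2)"
  define SU where "SU = (\<Sum>f\<in>U. (x $ f)\<^sup>2)"
  have "SD \<ge> 0" "SU \<ge> 0" by (simp_all add: SD_def SU_def sum_nonneg)
  have "1 - \<beta>\<^sup>2 > 0" using assms(3,4) by (simp add: power_less_one_iff abs_less_iff)
  have "(\<beta> / sqrt (1 - \<beta>\<^sup>2) * sqrt SU)\<^sup>2 \<le> (sqrt SD)\<^sup>2"
    using assms \<open>SU \<ge> 0\<close> \<open>1 - \<beta>\<^sup>2 > 0\<close> by (intro power_mono) (simp_all add: SD_def SU_def)
  then have "\<beta>\<^sup>2 / (1 - \<beta>\<^sup>2) * SU \<le> SD"
    using \<open>SD \<ge> 0\<close> \<open>SU \<ge> 0\<close> \<open>1 - \<beta>\<^sup>2 > 0\<close> by (simp add: power_mult_distrib power_divide)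
  then have "\<beta>\<^sup>2 * (SD + SU) \<le> SD"
    using \<open>1 - \<beta>\<^sup>2 > 0\<close> by (simp add: field_simps)
  moreover have "(norm x)\<^sup>2 = SD + SU"
  proof -
    have "restrict_vec UNIV x = x" by (simp add: restrict_vec_def vec_eq_iff)
    then have "(norm x)\<^sup>2 = (\<Sum>f\<in>D \<union> U. (x $ f)\<^sup>2)"
      using norm_restrict_vec_power2[of UNIV x] assms(2) by simp
    then show ?thesis using assms(1) by (simp add: SD_def SU_def sum.union_disjoint)
  qed
  ultimately have "(\<beta> * norm x)\<^sup>2 \<le> (norm (restrict_vec D x))\<^sup>2"
    by (simp add: power_mult_distrib norm_restrict_vec_power2 SD_def)
  then show ?thesis
    unfolding beta_desirable_def by (rule power2_le_imp_le) simp
qed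

theorem theorem2:
  fixes A :: "real^'n::finite^'n" and c h0 e :: "real^'n"
    and D U :: "'n set" and p \<alpha> \<beta> :: real
  assumes "p > 1"
    and "D \<inter> U = {}" and "D \<union> U = UNIV"
    and "\<And>f. c $ f > 0"
    and "causal_graph A"
    and "\<And>f. (contribution_matrix A *v h0) $ f \<ge> 0"
    and "0 < \<beta>" and "\<beta> < 1"
    and "sqrt (\<Sum>f\<in>D. ((contribution_matrix A *v h0) $ f / c $ f) powr (2 / (p - 1)))
         \<ge> \<beta> / sqrt (1 - \<beta>\<^sup>2) *
           sqrt (\<Sum>f\<in>U. ((contribution_matrix A *v h0) $ f / c $ f) powr (2 / (p - 1)))"
    and "best_response p c (contribution_matrix A *v h0) \<alpha> e"
  shows "beta_desirable D \<beta> e"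
proof -
  \<comment> \<open>Only the non-negativity of \<open>w\<close> matters.\<close>
  define w where "w = contribution_matrix A *v h0"
  define u where "u = response_direction p c w"
  obtain t where "e = t *\<^sub>R u"
    using best_response_scaled_direction assms(1,4,6,10) unfolding u_def w_def by blast
  have "(u $ f)\<^sup>2 = (w $ f / c $ f) powr (2 / (p - 1))" for f
    using assms(1,4,6) unfolding u_def w_def by (intro response_direction_power2)
  then have "beta_desirable D \<beta> u"
    using assms(2,3,7,8,9) unfolding w_def by (intro beta_desirable_of_partition) auto
  then show ?thesis
    using \<open>e = t *\<^sub>R u\<close> beta_desirable_scaleR by blast
qed

end
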